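(* Let $\mathbb{F}=[\mathcal{F}_1,\dots,\mathcal{F}_n]$ be an asymmetric fail-prone system on $\mathcal{P}=\{p_1,\dots,p_n\}$ in which every $\mathcal{F}_i$ is nonempty, let $\mathbb{Q}=[\mathcal{Q}_1,\dots,\mathcal{Q}_n]$ be an asymmetric Byzantine quorum system for $\mathbb{F}$, let $F\subseteq\mathcal{P}$ be the set of faulty processes, and suppose the maximal guild $\mathcal{G}_{\max}$ for $F$ is nonempty. Then for every correct process $p_i$ (i.e. $p_i\notin F$) and every quorum $Q_i\in\mathcal{Q}_i$, we have $Q_i\cap\mathcal{G}_{\max}\neq\emptyset$. In other words, $\mathcal{G}_{\max}$ is a kernel for every correct process.
   Context: An asymmetric fail-prone system is an array $\mathbb{F}=[\mathcal{F}_1,\dots,\mathcal{F}_n]$ where each $\mathcal{F}_i\subseteq 2^{\mathcal{P}}$ is a collection of subsets of $\mathcal{P}$, none contained in another. For $\mathcal{A}\subseteq 2^{\mathcal{P}}$, $\mathcal{A}^*=\{A' : A'\subseteq A\text{ for some }A\in\mathcal{A}\}$. An asymmetric Byzantine quorum system for $\mathbb{F}$ is an array $\mathbb{Q}=[\mathcal{Q}_1,\dots,\mathcal{Q}_n]$, $\mathcal{Q}_i\subseteq 2^{\mathcal{P}}$ (elements are quorums for $p_i$), such that (Consistency) for all $i,j$, $Q_i\in\mathcal{Q}_i$, $Q_j\in\mathcal{Q}_j$, $F_{ij}\in\mathcal{F}_i^*\cap\mathcal{F}_j^*$: $Q_i\cap Q_j\not\subseteq F_{ij}$; and (Availability) for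 all $i$, $F_i\in\mathcal{F}_i$ there is $Q_i\in\mathcal{Q}_i$ with $F_i\cap Q_i=\emptyset$. A guild for $F$ is a set $\mathcal{G}\subseteq\mathcal{P}$ such that every $p_i\in\mathcal{G}$ satisfies $p_i\notin F$ and $F\in\mathcal{F}_i^*$, and for every $p_i\in\mathcal{G}$ there is $Q_i\in\mathcal{Q}_i$ with $Q_i\subseteq\mathcal{G}$. The maximal guild $\mathcal{G}_{\max}$ is the union of all guilds for $F$ (itself a guild). A set $K$ is a kernel for $p_i$ if $K\cap Q_i\neq\emptyset$ for all $Q_i\in\mathcal{Q}_i$. *)

theory Defs
  imports Main
begin

text \<open>Processes are elements of a type 'p; the process set P is a finite set of them.
  Each process p_i is identified with its index i.\<close>

definition downclose :: "'a set set \<Rightarrow> 'a set set" where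
  "downclose A = {A'. \<exists>B\<in>A. A' \<subseteq> B}"

definition fail_prone_system :: "'p set \<Rightarrow> ('p \<Rightarrow> 'p set set) \<Rightarrow> bool" where
  "fail_prone_system P FF \<longleftrightarrow>
     (\<forall>i\<in>P. FF i \<subseteq> Pow P \<and> (\<forall>A\<in>FF i. \<forall>B\<in>FF i. A \<subseteq> B \<longrightarrow> A = B))"

definition asym_byz_quorum_system ::
  "'p set \<Rightarrow> ('p \<Rightarrow> 'p set set) \<Rightarrow> ('p \<Rightarrow> 'p set set) \<Rightarrow> bool" where
  "asym_byz_quorum_system P FF QQ \<longleftrightarrow>
     (\<forall>i\<in>P. QQ i \<subseteq> Pow P) \<and>
     (\<forall>i\<in>P. \<forall>j\<in>P. \<forall>Qi\<in>QQ i. \<forall>Qj\<in>QQ j.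
        \<forall>Fij\<in>downclose (FF i) \<inter> downclose (FF j). \<not> (Qi \<inter> Qj \<subseteq> Fij)) \<and>
     (\<forall>i\<in>P. \<forall>Fi\<in>FF i. \<exists>Qi\<in>QQ i. Fi \<inter> Qi = {})"

definition is_guild ::
  "'p set \<Rightarrow> ('p \<Rightarrow> 'p set set) \<Rightarrow> ('p \<Rightarrow> 'p set set) \<Rightarrow> 'p set \<Rightarrow> 'p set \<Rightarrow> bool" where
  "is_guild P FF QQ F G \<longleftrightarrow> G \<subseteq> P \<and>
     (\<forall>i\<in>G. i \<notin> F \<and> F \<in> downclose (FF i)) \<and>
     (\<forall>i\<in>G. \<exists>Q\<in>QQ i. Q \<subseteq> G)"

definition max_guild ::
  "'p set \<Rightarrow> ('p \<Rightarrow> 'p set set) \<Rightarrow> ('p \<Rightarrow> 'p set set) \<Rightarrow> 'p set \<Rightarrow> 'p set" where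
  "max_guild P FF QQ F = \<Union> {G. is_guild P FF QQ F G}"

definition is_kernel :: "('p \<Rightarrow> 'p set set) \<Rightarrow> 'p \<Rightarrow> 'p set \<Rightarrow> bool" where
  "is_kernel QQ i K \<longleftrightarrow> (\<forall>Q\<in>QQ i. K \<inter> Q \<noteq> {})"

end

theory Submission
  imports Defs
begin

text \<open>Since every fail-prone collection is nonempty, the empty set is a common
  element of all downclosures, so consistency says that any two quorums intersect.
  A nonempty maximal guild contains a member together with one of its quorums,
  and every quorum of every process must meet that quorum.\<close>

lemma empty_in_downclose: "A \<noteq> {} \<Longrightarrow> {} \<in> downclose A"
  unfolding downclose_def by blast

lemma asym_byz_quorum_system_quorums_intersect:
  assumes "asym_byz_quorum_system P FF QQ"
    and "\<forall>i\<in>P. FF i \<noteq> {}"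
    and "i \<in> P" "j \<in> P" "Qi \<in> QQ i" "Qj \<in> QQ j"
  shows "Qi \<inter> Qj \<noteq> {}"
proof -
  have "{} \<in> downclose (FF i) \<inter> downclose (FF j)"
    using assms(2-4) empty_in_downclose by blast
  then have "\<not> Qi \<inter> Qj \<subseteq> {}"
    using assms(1,3-6) unfolding asym_byz_quorum_system_def by blast
  then show ?thesis by blast
qed

lemma guild_subset_max_guild: "is_guild P FF QQ F G \<Longrightarrow> G \<subseteq> max_guild P FF QQ F"
  unfolding max_guild_def by blast

lemma max_guild_contains_quorum:
  assumes "max_guild P FF QQ F \<noteq> {}"
  obtains j Q where "j \<in> P" "Q \<in> QQ j" "Q \<subseteq> max_guild P FF QQ F"
proof -
  obtain j G where G: "is_guild P FF QQ F G" and "j \<in> G"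
    using assms unfolding max_guild_def by blast
  then obtain Q where "j \<in> P" "Q \<in> QQ j" "Q \<subseteq> G"
    unfolding is_guild_def by blast
  moreover have "G \<subseteq> max_guild P FF QQ F"
    using G by (rule guild_subset_max_guild)
  ultimately show thesis
    using that by blast
qed

lemma quorum_meets_max_guild:
  assumes "asym_byz_quorum_system P FF QQ"
    and "\<forall>i\<in>P. FF i \<noteq> {}"
    and "max_guild P FF QQ F \<noteq> {}"
    and "i \<in> P" "Qi \<in> QQ i"
  shows "Qi \<inter> max_guild P FF QQ F \<noteq> {}"
proof -
  obtain j Q where j: "j \<in> P" and Q: "Q \<in> QQ j" and Q_sub: "Q \<subseteq> max_guild P FF QQ F"
    using max_guild_contains_quorum[OF assms(3)] .
  have "Qi \<inter> Q \<noteq> {}"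
    using asym_byz_quorum_system_quorums_intersect[OF assms(1,2,4) j assms(5) Q] .
  with Q_sub show ?thesis by blast
qed

theorem mainTheorem4:
  fixes P :: "'p set" and FF QQ :: "'p \<Rightarrow> 'p set set" and F :: "'p set"
  assumes "finite P"
    and "fail_prone_system P FF"
    and "\<forall>i\<in>P. FF i \<noteq> {}"
    and "asym_byz_quorum_system P FF QQ"
    and "F \<subseteq> P"
    and "max_guild P FF QQ F \<noteq> {}"
  shows "\<forall>i\<in>P. i \<notin> F \<longrightarrow> (\<forall>Qi\<in>QQ i. Qi \<inter> max_guild P FF QQ F \<noteq> {})
           \<and> is_kernel QQ i (max_guild P FF QQ F)"
  using quorum_meets_max_guild[OF assms(4,3,6)]
  unfolding is_kernel_def by (simp add: Int_commute)

end
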